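(* For every odd integer $T=2k+1\ge 5$ and every $\sigma\in\mathfrak S_3$, the vector $\sigma c$ with $c=[1,1,-1,-1,1,1]$ defines a facet of $P^T$.
   Context: For an integer $T\ge 2$, let $\Omega_T$ be the set of words $w=s_1s_2\cdots s_T$ over $\{1,2,3\}$ with $s_l\neq s_{l+1}$ for $l=1,\dots,T-1$. For $w\in\Omega_T$ and an ordered pair $ij$, $i\neq j$, let $x_{ij}(w)$ be the number of indices $1\le l\le T-1$ with $s_ls_{l+1}=ij$. Vectors of $\mathbb R^6$ are indexed in the order $[x_{12},x_{13},x_{21},x_{23},x_{31},x_{32}]$. Let $a_w=[x_{12}(w),\dots,x_{32}(w)]$ and $P^T=\mathrm{conv}\{a_w:w\in\Omega_T\}$. $\mathfrak S_3$ acts on $\mathbb R^6$ by $(\sigma c)_{ij}=c_{\sigma(i)\sigma(j)}$. A vector $c$ defines a facet of $P^T$ if $c\cdot a_w\ge0$ for all $w\in\Omega_T$ and $\{x\in P^T: c\cdot x=0\}$ is a facet of $P^T$. *)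

theory Defs
  imports "HOL-Analysis.Analysis"
begin

definition Omega :: "nat \<Rightarrow> nat list set" where
  "Omega T = {w. length w = T \<and> set w \<subseteq> {1,2,3} \<and>
                 (\<forall>l. l + 1 < T \<longrightarrow> w ! l \<noteq> w ! (l + 1))}"

definition xcount :: "nat \<Rightarrow> nat \<Rightarrow> nat list \<Rightarrow> nat" where
  "xcount i j w = card {l. l + 1 < length w \<and> w ! l = i \<and> w ! (l + 1) = j}"

text \<open>Coordinates ordered as [x12, x13, x21, x23, x31, x32].\<close>
definition avec :: "nat list \<Rightarrow> real^6" where
  "avec w = vector [real (xcount 1 2 w), real (xcount 1 3 w), real (xcount 2 1 w),
                    real (xcount 2 3 w), real (xcount 3 1 w), real (xcount 3 2 w)]"

definition P :: "nat \<Rightarrow> (real^6) set" where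
  "P T = convex hull (avec ` Omega T)"

definition ent :: "real^6 \<Rightarrow> nat \<Rightarrow> nat \<Rightarrow> real" where
  "ent c i j =
     (if (i,j) = (1,2) then c$1 else if (i,j) = (1,3) then c$2 else
      if (i,j) = (2,1) then c$3 else if (i,j) = (2,3) then c$4 else
      if (i,j) = (3,1) then c$5 else if (i,j) = (3,2) then c$6 else 0)"

definition sact :: "(nat \<Rightarrow> nat) \<Rightarrow> real^6 \<Rightarrow> real^6" where
  "sact \<sigma> c = vector [ent c (\<sigma> 1) (\<sigma> 2), ent c (\<sigma> 1) (\<sigma> 3), ent c (\<sigma> 2) (\<sigma> 1),
                      ent c (\<sigma> 2) (\<sigma> 3), ent c (\<sigma> 3) (\<sigma> 1), ent c (\<sigma> 3) (\<sigma> 2)]"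

definition defines_facet :: "nat \<Rightarrow> real^6 \<Rightarrow> bool" where
  "defines_facet T c \<longleftrightarrow>
     (\<forall>w \<in> Omega T. c \<bullet> avec w \<ge> 0) \<and>
     {x \<in> P T. c \<bullet> x = 0} facet_of P T"

end

theory Submission imports Defs begin

text \<open>For a weight g on the letters, the functional x \<mapsto> \<Sum> g(i) x_ij takes the value
  g(s_1) + \<dots> + g(s_(T-1)) at a_w. Up to the action of S_3, \<open>\<sigma>c\<close> is this functional for
  g = -1 on one letter m and g = 1 on the other two. Since T - 1 = 2k is even, the positions
  split into k adjacent pairs, each containing m at most once, so the value is nonnegative and
  \<open>c \<bullet> x = 0\<close> is a supporting hyperplane. The face is proper (the word abab\<dots>a has value
  2k) and P^T lies in the hyperplane \<Sum> x_ij = T - 1, so it remains to exhibit five affinely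
  independent words of value 0. The words (ma)^k m, (ma)^k b, (mb)^k a, (mb)^k m and (am)^k b do:
  their coordinates x_ab, x_ba, x_bm, x_mb form a triangular system.\<close>

lemma xcount_conv_sum:
  "xcount i j w = (\<Sum>l<length w - 1. if w ! l = i \<and> w ! (l + 1) = j then 1 else 0)"
proof -
  have "{l. l + 1 < length w \<and> w ! l = i \<and> w ! (l + 1) = j} =
        {l \<in> {..<length w - 1}. w ! l = i \<and> w ! (l + 1) = j}"
    by auto
  then show ?thesis
    unfolding xcount_def by (simp add: sum.inter_filter[symmetric])
qed

lemma xcount_Cons_Cons:
  "xcount i j (x # y # w) = (if x = i \<and> y = j then 1 else 0) + xcount i j (y # w)"
  unfolding xcount_conv_sum by (simp only: length_Cons diff_Suc_1 sum.lessThan_Suc_shift) simp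

lemma xcount_singleton [simp]: "xcount i j [x] = 0"
  unfolding xcount_conv_sum by simp

fun alternating :: "nat \<Rightarrow> nat \<Rightarrow> nat \<Rightarrow> nat \<Rightarrow> nat list" where
  "alternating x y 0 z = [z]"
| "alternating x y (Suc n) z = x # y # alternating x y n z"

lemma length_alternating [simp]: "length (alternating x y n z) = 2 * n + 1"
  by (induction n) auto

lemma nth_alternating:
  "l < 2 * n + 1 \<Longrightarrow>
   alternating x y n z ! l = (if l < 2 * n then if even l then x else y else z)"
proof (induction n arbitrary: l)
  case (Suc n)
  then show ?case
    by (auto simp: nth_Cons')
qed simp

lemma alternating_in_Omega:
  assumes "x \<in> {1,2,3}" "y \<in> {1,2,3}" "z \<in> {1,2,3}" "x \<noteq> y" "y \<noteq> z"
  shows "alternating x y n z \<in> Omega (2 * n + 1)"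
proof -
  have "set (alternating x y n z) \<subseteq> {1,2,3}"
    using assms by (induction n) auto
  moreover have "alternating x y n z ! l \<noteq> alternating x y n z ! (l + 1)"
    if "l + 1 < 2 * n + 1" for l
    using that assms by (auto simp: nth_alternating)
  ultimately show ?thesis
    unfolding Omega_def by simp
qed

lemma xcount_alternating:
  assumes "n \<ge> 1"
  shows "xcount i j (alternating x y n z) =
    n * (if x = i \<and> y = j then 1 else 0) + (n - 1) * (if y = i \<and> x = j then 1 else 0)
    + (if y = i \<and> z = j then 1 else 0)"
  using assms
proof (induction n rule: dec_induct)
  case (step n)
  then show ?case
    by (cases n) (auto simp: xcount_Cons_Cons)
qed (simp add: xcount_Cons_Cons)

lemma UNIV_6: "(UNIV :: 6 set) = {1, 2, 3, 4, 5, 6}"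
proof -
  have "x \<in> {1, 2, 3, 4, 5, 6}" for x :: 6
  proof (induction x)
    case (of_int z)
    then have "z \<in> {0, 1, 2, 3, 4, 5}" by fastforce
    then show ?case by auto
  qed
  then show ?thesis by blast
qed

lemma inner_vec_6:
  "(x :: real^6) \<bullet> y = x$1 * y$1 + x$2 * y$2 + x$3 * y$3 + x$4 * y$4 + x$5 * y$5 + x$6 * y$6"
  unfolding inner_vec_def UNIV_6 by simp

lemma vector_6_nth [simp]:
  "(vector [a, b, c, d, e, f] :: 'a::zero^6) $ 1 = a"
  "(vector [a, b, c, d, e, f] :: 'a::zero^6) $ 2 = b"
  "(vector [a, b, c, d, e, f] :: 'a::zero^6) $ 3 = c"
  "(vector [a, b, c, d, e, f] :: 'a::zero^6) $ 4 = d"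
  "(vector [a, b, c, d, e, f] :: 'a::zero^6) $ 5 = e"
  "(vector [a, b, c, d, e, f] :: 'a::zero^6) $ 6 = f"
  unfolding vector_def by simp_all

lemma ent_add: "ent (x + y) i j = ent x i j + ent y i j"
  unfolding ent_def by simp

lemma ent_scaleR: "ent (r *\<^sub>R x) i j = r * ent x i j"
  unfolding ent_def by simp

lemma ent_zero: "ent 0 i j = 0"
  unfolding ent_def by simp

lemma ent_avec:
  "i \<in> {1,2,3} \<Longrightarrow> j \<in> {1,2,3} \<Longrightarrow> i \<noteq> j \<Longrightarrow> ent (avec w) i j = real (xcount i j w)"
  unfolding ent_def avec_def by auto

definition letter_weight :: "(nat \<Rightarrow> real) \<Rightarrow> real^6" where
  "letter_weight g = vector [g 1, g 1, g 2, g 2, g 3, g 3]"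

lemma ent_letter_weight:
  "i \<in> {1,2,3} \<Longrightarrow> j \<in> {1,2,3} \<Longrightarrow> i \<noteq> j \<Longrightarrow> ent (letter_weight g) i j = g i"
  unfolding ent_def letter_weight_def by auto

lemma sact_letter_weight:
  assumes "\<sigma> permutes {1,2,3}"
  shows "sact \<sigma> (letter_weight g) = letter_weight (g \<circ> \<sigma>)"
proof -
  have "\<sigma> i \<in> {1,2,3}" if "i \<in> {1,2,3}" for i
    using permutes_in_image[OF assms] that by blast
  moreover have "\<sigma> i \<noteq> \<sigma> j" if "i \<noteq> j" for i j
    using permutes_inj[OF assms] that by (auto dest: injD)
  ultimately show ?thesis
    unfolding sact_def by (simp add: ent_letter_weight) (simp add: letter_weight_def)
qed

lemma inner_letter_weight_avec:
  assumes w: "w \<in> Omega T"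
  shows "letter_weight g \<bullet> avec w = (\<Sum>l<T - 1. g (w ! l))"
proof -
  let ?I = "\<lambda>i j l. if w ! l = i \<and> w ! (l + 1) = j then 1 else 0 :: real"
  have len: "length w = T" and letters: "set w \<subseteq> {1,2,3}"
    and adj: "\<And>l. l + 1 < T \<Longrightarrow> w ! l \<noteq> w ! (l + 1)"
    using w unfolding Omega_def by auto
  have xcount: "real (xcount i j w) = (\<Sum>l<T - 1. ?I i j l)" for i j
    unfolding xcount_conv_sum len of_nat_sum by (intro sum.cong) auto
  have "g (w ! l) = g 1 * ?I 1 2 l + g 1 * ?I 1 3 l + g 2 * ?I 2 1 l
                  + g 2 * ?I 2 3 l + g 3 * ?I 3 1 l + g 3 * ?I 3 2 l"
    if "l < T - 1" for l
  proof -
    have "l + 1 < T"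
      using that by simp
    then have "w ! l \<in> set w" "w ! (l + 1) \<in> set w"
      using len by simp_all
    then have "w ! l \<in> {1,2,3}" "w ! (l + 1) \<in> {1,2,3}"
      using letters by blast+
    then show ?thesis
      using adj[OF \<open>l + 1 < T\<close>] by auto
  qed
  then have "(\<Sum>l<T - 1. g (w ! l)) =
      (\<Sum>l<T - 1. g 1 * ?I 1 2 l + g 1 * ?I 1 3 l + g 2 * ?I 2 1 l
                 + g 2 * ?I 2 3 l + g 3 * ?I 3 1 l + g 3 * ?I 3 2 l)"
    by (intro sum.cong) auto
  also have "\<dots> = letter_weight g \<bullet> avec w"
    unfolding inner_vec_6 avec_def letter_weight_def vector_6_nth xcount
    by (simp add: sum.distrib sum_distrib_left)
  finally show ?thesis by simp
qed

lemma inner_letter_weight_alternating: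
  assumes "x \<in> {1,2,3}" "y \<in> {1,2,3}" "z \<in> {1,2,3}" "x \<noteq> y" "y \<noteq> z" "n \<ge> 1"
  shows "letter_weight g \<bullet> avec (alternating x y n z) = real n * (g x + g y)"
  using assms of_nat_diff[OF \<open>n \<ge> 1\<close>]
  unfolding inner_vec_6 avec_def letter_weight_def vector_6_nth xcount_alternating[OF \<open>n \<ge> 1\<close>]
  by (auto simp: algebra_simps)

lemma sum_lessThan_double:
  "(\<Sum>l<2 * (k::nat). h l) = (\<Sum>t<k. h (2 * t) + h (2 * t + 1))"
  by (induction k) (simp_all add: algebra_simps)

lemma inner_letter_weight_nonneg:
  assumes w: "w \<in> Omega (2 * k + 1)"
    and g: "\<And>x y. x \<in> {1,2,3} \<Longrightarrow> y \<in> {1,2,3} \<Longrightarrow> x \<noteq> y \<Longrightarrow> g x + g y \<ge> 0"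
  shows "letter_weight g \<bullet> avec w \<ge> 0"
proof -
  have "g (w ! (2 * t)) + g (w ! (2 * t + 1)) \<ge> 0" if "t < k" for t
  proof (rule g)
    have "w ! (2 * t) \<in> set w" "w ! (2 * t + 1) \<in> set w"
      using w that unfolding Omega_def by auto
    then show "w ! (2 * t) \<in> {1,2,3}" "w ! (2 * t + 1) \<in> {1,2,3}"
      using w unfolding Omega_def by auto
    show "w ! (2 * t) \<noteq> w ! (2 * t + 1)"
      using w that unfolding Omega_def by auto
  qed
  then show ?thesis
    unfolding inner_letter_weight_avec[OF w] by (auto simp: sum_lessThan_double intro!: sum_nonneg)
qed

lemma facet_of_if_aff_dim_ge:
  fixes S :: "'a::euclidean_space set"
  assumes "convex S" "F face_of S" "F \<noteq> {}" "F \<noteq> S" "aff_dim S \<le> aff_dim F + 1"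
  shows "F facet_of S"
  using face_of_aff_dim_lt[OF assms(1,2,4)] assms(2,3,5) unfolding facet_of_def by simp

lemma avec_in_P: "w \<in> Omega T \<Longrightarrow> avec w \<in> P T"
  unfolding P_def by (rule hull_inc) simp

lemma zero_set_face_of_P:
  assumes "\<forall>w \<in> Omega T. c \<bullet> avec w \<ge> 0"
  shows "{x \<in> P T. c \<bullet> x = 0} face_of P T"
proof -
  have "P T \<subseteq> {x. c \<bullet> x \<ge> 0}"
    unfolding P_def by (rule hull_minimal) (use assms convex_halfspace_ge in auto)
  then have "(P T \<inter> {x. c \<bullet> x = 0}) face_of P T"
    unfolding P_def by (intro face_of_Int_supporting_hyperplane_ge) auto
  then show ?thesis
    by (simp add: Int_def)
qed

lemma aff_dim_P_le: "aff_dim (P T) \<le> 5"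
proof -
  have length_sum: "letter_weight (\<lambda>_. 1) \<bullet> avec w = real (T - 1)" if "w \<in> Omega T" for w
    using inner_letter_weight_avec[OF that, of "\<lambda>_. 1"] by simp
  have "P T \<subseteq> {x. letter_weight (\<lambda>_. 1) \<bullet> x = real (T - 1)}"
    unfolding P_def by (rule hull_minimal) (use length_sum convex_hyperplane in auto)
  moreover have "letter_weight (\<lambda>_. 1) \<noteq> 0"
    by (metis letter_weight_def vector_6_nth(1) zero_index zero_neq_one)
  ultimately show ?thesis
    using aff_dim_subset[of "P T" "{x. letter_weight (\<lambda>_. 1) \<bullet> x = real (T - 1)}"] by simp
qed

lemma aff_dim_alternating_words:
  assumes letters: "m \<in> {1,2,3}" "a \<in> {1,2,3}" "b \<in> {1,2,3}" "distinct [m, a, b]"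
    and k: "k \<ge> 1"
  shows "aff_dim {avec (alternating m a k m), avec (alternating m a k b),
    avec (alternating m b k a), avec (alternating m b k m), avec (alternating a m k b)} = 4"
    (is "aff_dim {?p1, ?p2, ?p3, ?p4, ?p5} = 4")
proof -
  have ent: "ent (avec w) i j = real (xcount i j w)"
    if "i \<in> {1,2,3}" "j \<in> {1,2,3}" "i \<noteq> j" for w i j
    using ent_avec that .
  note xcount = xcount_alternating[OF k]
  have e1: "ent ?p1 a b = 0" "ent ?p1 b a = 0" "ent ?p1 b m = 0" "ent ?p1 m b = 0"
    using letters by (auto simp: ent xcount)
  have e2: "ent ?p2 a b = 1" "ent ?p2 b a = 0" "ent ?p2 b m = 0" "ent ?p2 m b = 0"
    using letters by (auto simp: ent xcount)
  have e3: "ent ?p3 a b = 0" "ent ?p3 b a = 1" "ent ?p3 b m = real k - 1" "ent ?p3 m b = real k"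
    using letters k by (auto simp: ent xcount of_nat_diff)
  have e4: "ent ?p4 a b = 0" "ent ?p4 b a = 0" "ent ?p4 b m = real k" "ent ?p4 m b = real k"
    using letters k by (auto simp: ent xcount of_nat_diff)
  have e5: "ent ?p5 a b = 0" "ent ?p5 b a = 0" "ent ?p5 b m = 0" "ent ?p5 m b = 1"
    using letters by (auto simp: ent xcount)
  note e = e1 e2 e3 e4 e5
  have distinct_points: "distinct [?p1, ?p2, ?p3, ?p4, ?p5]"
    using e k by (auto dest: arg_cong[where f = "\<lambda>p. ent p a b"] arg_cong[where f = "\<lambda>p. ent p b a"]
       arg_cong[where f = "\<lambda>p. ent p b m"] arg_cong[where f = "\<lambda>p. ent p m b"])
  have independent: "\<not> affine_dependent {?p1, ?p2, ?p3, ?p4, ?p5}"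
  proof
    assume "affine_dependent {?p1, ?p2, ?p3, ?p4, ?p5}"
    then obtain U where U: "sum U {?p1, ?p2, ?p3, ?p4, ?p5} = 0"
      "\<exists>v\<in>{?p1, ?p2, ?p3, ?p4, ?p5}. U v \<noteq> 0"
      "(\<Sum>v\<in>{?p1, ?p2, ?p3, ?p4, ?p5}. U v *\<^sub>R v) = 0"
      unfolding affine_dependent_explicit_finite[OF finite.insertI[OF finite.insertI[OF
          finite.insertI[OF finite.insertI[OF finite.insertI[OF finite.emptyI]]]]]]
      by blast
    have weights: "U ?p1 + U ?p2 + U ?p3 + U ?p4 + U ?p5 = 0"
      using U(1) distinct_points by simp
    have combination: "U ?p1 *\<^sub>R ?p1 + U ?p2 *\<^sub>R ?p2 + U ?p3 *\<^sub>R ?p3 + U ?p4 *\<^sub>R ?p4 + U ?p5 *\<^sub>R ?p5 = 0"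
      using U(3) distinct_points by (simp add: algebra_simps)
    have coord: "U ?p1 * ent ?p1 i j + U ?p2 * ent ?p2 i j + U ?p3 * ent ?p3 i j
        + U ?p4 * ent ?p4 i j + U ?p5 * ent ?p5 i j = 0" for i j
      using arg_cong[OF combination, of "\<lambda>p. ent p i j"] by (simp add: ent_add ent_scaleR ent_zero)
    have "U ?p2 = 0" "U ?p3 = 0"
      using coord[of a b] coord[of b a] e by simp_all
    moreover from this have "U ?p4 = 0"
      using coord[of b m] e k by simp
    moreover from calculation have "U ?p5 = 0"
      using coord[of m b] e by simp
    ultimately show False
      using weights U(2) by auto
  qed
  show ?thesis
    using aff_dim_affine_independent[OF independent] distinct_card[OF distinct_points] by simp
qed

lemma letter_weight_defines_facet:
  assumes m: "m \<in> {1,2,3}" and k: "k \<ge> 1"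
  shows "defines_facet (2 * k + 1) (letter_weight (\<lambda>i. if i = m then -1 else 1))"
proof -
  obtain a b where letters: "a \<in> {1,2,3}" "b \<in> {1,2,3}" "distinct [m, a, b]"
    using m that[of "if m = 1 then 2 else 1" "if m = 3 then 2 else 3"] by auto
  define g :: "nat \<Rightarrow> real" where "g = (\<lambda>i. if i = m then -1 else 1)"
  define F where "F = {x \<in> P (2 * k + 1). letter_weight g \<bullet> x = 0}"
  have nonneg: "\<forall>w \<in> Omega (2 * k + 1). letter_weight g \<bullet> avec w \<ge> 0"
    using inner_letter_weight_nonneg[where g = g] unfolding g_def by auto
  have face: "F face_of P (2 * k + 1)"
    unfolding F_def using zero_set_face_of_P[OF nonneg] .
  have in_F: "avec (alternating x y k z) \<in> F"
    if "x \<in> {1,2,3}" "y \<in> {1,2,3}" "z \<in> {1,2,3}" "x \<noteq> y" "y \<noteq> z" "g x + g y = 0" for x y z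
    unfolding F_def using avec_in_P[OF alternating_in_Omega[OF that(1-5)]]
      inner_letter_weight_alternating[OF that(1-5) k] that(6) by simp
  have words_in_F: "{avec (alternating m a k m), avec (alternating m a k b),
      avec (alternating m b k a), avec (alternating m b k m), avec (alternating a m k b)} \<subseteq> F"
    using m letters by (intro insert_subsetI empty_subsetI in_F) (auto simp: g_def)
  have "avec (alternating a b k a) \<notin> F"
    unfolding F_def using inner_letter_weight_alternating[of a b a k g] letters k by (simp add: g_def)
  moreover have "avec (alternating a b k a) \<in> P (2 * k + 1)"
    using avec_in_P alternating_in_Omega letters by simp
  ultimately have proper: "F \<noteq> P (2 * k + 1)"
    by blast
  have "aff_dim F \<ge> 4"
    using aff_dim_subset[OF words_in_F] aff_dim_alternating_words[OF m letters k] by simp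
  then have "aff_dim (P (2 * k + 1)) \<le> aff_dim F + 1"
    using aff_dim_P_le[of "2 * k + 1"] by linarith
  moreover have "convex (P (2 * k + 1))" "F \<noteq> {}"
    unfolding P_def using words_in_F by auto
  ultimately have "F facet_of P (2 * k + 1)"
    using face proper facet_of_if_aff_dim_ge by blast
  then show ?thesis
    unfolding defines_facet_def F_def using nonneg g_def by simp
qed

theorem proposition7:
  fixes k :: nat and \<sigma> :: "nat \<Rightarrow> nat"
  assumes "2 * k + 1 \<ge> 5"
    and "\<sigma> permutes {1, 2, 3}"
  shows "defines_facet (2 * k + 1) (sact \<sigma> (vector [1, 1, -1, -1, 1, 1]))"
proof -
  obtain m where m: "m \<in> {1,2,3}" "\<sigma> m = 2"
    using permutes_image[OF assms(2)] by (metis imageE insertCI)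
  have "\<sigma> i = 2 \<longleftrightarrow> i = m" for i
    using m(2) permutes_inj[OF assms(2)] by (metis injD)
  then have "sact \<sigma> (letter_weight (\<lambda>i. if i = 2 then -1 else 1)) =
      letter_weight (\<lambda>i. if i = m then -1 else 1)"
    using sact_letter_weight[OF assms(2)] by (simp add: comp_def)
  moreover have "letter_weight (\<lambda>i. if i = 2 then -1 else 1) = vector [1, 1, -1, -1, 1, 1]"
    unfolding letter_weight_def by simp
  ultimately show ?thesis
    using letter_weight_defines_facet[OF m(1)] assms(1) by simp
qed

end
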